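(* Let $X=\{(x,s)\in\mathbb{R}^n\times\mathbb{R}^n : e^Tx=1,\ x-s\le0,\ -x-s\le0\}$, where $e=(1,\dots,1)^T$, and let $(a,b)\in\mathbb{R}^n\times\mathbb{R}^n$. Let $(x^*,s^* )=P_X(a,b)$ denote the Euclidean projection of $(a,b)$ onto $X$. Then $$x^*=\tfrac12\big(\max\{0,a+b-\mu e\}-\max\{0,b-a+\mu e\}\big),\qquad s^*=\tfrac12\big(\max\{0,b-a+\mu e\}+\max\{0,a+b-\mu e\}\big),$$ where the maxima are taken componentwise and $\mu\in\mathbb{R}$ is a root of $$t(u):=\sum_{i=1}^n\Big(\max\{0,a_i+b_i-u\}-\max\{0,b_i-a_i+u\}\Big)-2.$$ *)

theory Defs
  imports "HOL-Analysis.Analysis"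
begin

definition Xset :: "((real^'n) \<times> (real^'n)) set" where
  "Xset = {(x, s). (\<Sum>i\<in>UNIV. x $ i) = 1 \<and> (\<forall>i. x $ i - s $ i \<le> 0) \<and> (\<forall>i. - x $ i - s $ i \<le> 0)}"

definition tfun :: "real^'n \<Rightarrow> real^'n \<Rightarrow> real \<Rightarrow> real" where
  "tfun a b u = (\<Sum>i\<in>UNIV. max 0 (a $ i + b $ i - u) - max 0 (b $ i - a $ i + u)) - 2"

end

theory Submission
  imports Defs
begin

text \<open>The candidate point (x', s') satisfies the variational characterisation of the
  projection, with \<mu> playing the role of the Lagrange multiplier of the constraint e^T x = 1:
  coordinatewise (a_i - x'_i)(x_i - x'_i) + (b_i - s'_i)(s_i - s'_i) \<le> \<mu> (x_i - x'_i) whenever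
  |x_i| \<le> s_i, and summing over i gives 0 because both x and x' have coordinate sum 1,
  the latter being exactly the equation t(\<mu>) = 0.\<close>

lemma closest_point_eqI:
  fixes S :: "'a::{real_inner,heine_borel} set"
  assumes "q \<in> S" and obtuse: "\<And>z. z \<in> S \<Longrightarrow> inner (y - q) (z - q) \<le> 0"
  shows "closest_point S y = q"
proof -
  have closer: "dist y q < dist y z" if "z \<in> S" "z \<noteq> q" for z
  proof -
    have "(dist y z)\<^sup>2 = (dist y q)\<^sup>2 - 2 * inner (y - q) (z - q) + (norm (z - q))\<^sup>2"
      using dot_norm_neg[of "y - q" "z - q"] by (simp add: dist_norm algebra_simps)
    moreover have "norm (z - q) > 0"
      using that by simp
    ultimately have "(dist y q)\<^sup>2 < (dist y z)\<^sup>2"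
      using obtuse[OF that(1)] by (smt (verit) zero_less_power)
    then show ?thesis
      by (simp add: power_less_imp_less_base)
  qed
  show ?thesis
    unfolding closest_point_def
    by (rule some_equality) (use assms closer in \<open>force simp: order_le_less, meson not_less\<close>)
qed

lemma proj_coord_obtuse_le:
  fixes a b x s \<mu> :: real
  assumes "\<bar>x\<bar> \<le> s"
  defines "\<alpha> \<equiv> max 0 (a + b - \<mu>)" and "\<beta> \<equiv> max 0 (b - a + \<mu>)"
  shows "(a - (\<alpha> - \<beta>) / 2) * (x - (\<alpha> - \<beta>) / 2) + (b - (\<alpha> + \<beta>) / 2) * (s - (\<alpha> + \<beta>) / 2)
         \<le> \<mu> * (x - (\<alpha> - \<beta>) / 2)"
proof -
  have "(s + x - \<alpha>) * (a + b - \<mu> - \<alpha>) \<le> 0"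
    using assms by (cases "a + b - \<mu> \<ge> 0") (auto simp: \<alpha>_def mult_nonneg_nonpos)
  moreover have "(s - x - \<beta>) * (b - a + \<mu> - \<beta>) \<le> 0"
    using assms by (cases "b - a + \<mu> \<ge> 0") (auto simp: \<beta>_def mult_nonneg_nonpos)
  ultimately show ?thesis
    \<comment> \<open>the difference of the two sides is half the sum of these two products\<close>
    by (simp add: field_simps)
qed

definition proj_x :: "real^'n \<Rightarrow> real^'n \<Rightarrow> real \<Rightarrow> real^'n" where
  "proj_x a b \<mu> = (\<chi> i. (max 0 (a $ i + b $ i - \<mu>) - max 0 (b $ i - a $ i + \<mu>)) / 2)"

definition proj_s :: "real^'n \<Rightarrow> real^'n \<Rightarrow> real \<Rightarrow> real^'n" where
  "proj_s a b \<mu> = (\<chi> i. (max 0 (b $ i - a $ i + \<mu>) + max 0 (a $ i + b $ i - \<mu>)) / 2)"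

lemma sum_proj_x: "(\<Sum>i\<in>UNIV. proj_x a b \<mu> $ i) = tfun a b \<mu> / 2 + 1"
  by (simp add: proj_x_def tfun_def sum_divide_distrib[symmetric] field_simps)

lemma abs_proj_x_le_proj_s: "\<bar>proj_x a b \<mu> $ i\<bar> \<le> proj_s a b \<mu> $ i"
  by (simp add: proj_x_def proj_s_def)

lemma proj_in_Xset:
  assumes "tfun a b \<mu> = 0"
  shows "(proj_x a b \<mu>, proj_s a b \<mu>) \<in> Xset"
  using assms abs_proj_x_le_proj_s[of a b \<mu>] by (auto simp: Xset_def sum_proj_x abs_le_iff)

lemma proj_obtuse_le:
  fixes a b x s :: "real^'n" and \<mu> :: real
  assumes "\<And>i. \<bar>x $ i\<bar> \<le> s $ i"
  defines "q \<equiv> (proj_x a b \<mu>, proj_s a b \<mu>)"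
  shows "inner ((a, b) - q) ((x, s) - q) \<le> \<mu> * ((\<Sum>i\<in>UNIV. x $ i) - (\<Sum>i\<in>UNIV. proj_x a b \<mu> $ i))"
proof -
  have "inner ((a, b) - q) ((x, s) - q) =
    (\<Sum>i\<in>UNIV. (a $ i - proj_x a b \<mu> $ i) * (x $ i - proj_x a b \<mu> $ i)
               + (b $ i - proj_s a b \<mu> $ i) * (s $ i - proj_s a b \<mu> $ i))"
    by (simp add: q_def inner_vec_def sum.distrib)
  also have "\<dots> \<le> (\<Sum>i\<in>UNIV. \<mu> * (x $ i - proj_x a b \<mu> $ i))"
    using proj_coord_obtuse_le[OF assms(1)]
    by (intro sum_mono) (simp add: proj_x_def proj_s_def add.commute)
  also have "\<dots> = \<mu> * ((\<Sum>i\<in>UNIV. x $ i) - (\<Sum>i\<in>UNIV. proj_x a b \<mu> $ i))"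
    by (simp add: sum_distrib_left[symmetric] sum_subtractf)
  finally show ?thesis .
qed

theorem mainTheorem7:
  fixes a b :: "real^'n" and \<mu> :: real
  assumes "tfun a b \<mu> = 0"
  shows "closest_point Xset (a, b) =
    ((\<chi> i. (max 0 (a $ i + b $ i - \<mu>) - max 0 (b $ i - a $ i + \<mu>)) / 2),
     (\<chi> i. (max 0 (b $ i - a $ i + \<mu>) + max 0 (a $ i + b $ i - \<mu>)) / 2))"
proof -
  have "closest_point Xset (a, b) = (proj_x a b \<mu>, proj_s a b \<mu>)"
  proof (rule closest_point_eqI)
    show "(proj_x a b \<mu>, proj_s a b \<mu>) \<in> Xset"
      using assms by (rule proj_in_Xset)
  next
    fix z :: "(real^'n) \<times> (real^'n)"
    assume "z \<in> Xset"
    then obtain x s where z: "z = (x, s)" "(\<Sum>i\<in>UNIV. x $ i) = 1" "\<And>i. \<bar>x $ i\<bar> \<le> s $ i"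
      by (cases z) (auto simp: Xset_def abs_le_iff)
    show "inner ((a, b) - (proj_x a b \<mu>, proj_s a b \<mu>)) (z - (proj_x a b \<mu>, proj_s a b \<mu>)) \<le> 0"
      using proj_obtuse_le[OF z(3), of a b \<mu>] z(1,2) assms by (simp add: sum_proj_x)
  qed
  then show ?thesis
    by (simp add: proj_x_def proj_s_def)
qed

end
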